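(* Let $q:G'\to G$ be an epimorphism of groups with finite kernel $\Gamma$, let $W$ be a closed connected oriented surface of genus $d\ge1$ with $\pi=\pi_1(W)$, and let $g:\pi\to G$ be a group homomorphism. Then the number $|\mathrm{Hom}_g(\pi,G')|$ is divisible by $|\Gamma|\,|Z(\Gamma)|^{2d-2}$, where $Z(\Gamma)$ is the center of $\Gamma$.
   Context: $\mathrm{Hom}_g(\pi,G')$ is the set of homomorphisms $g':\pi\to G'$ with $qg'=g$. *)

theory Defs
  imports "HOL-Algebra.Algebra"
begin

definition grp_commutator :: "('a, 'b) monoid_scheme \<Rightarrow> 'a \<Rightarrow> 'a \<Rightarrow> 'a" where
  "grp_commutator G x y = x \<otimes>\<^bsub>G\<^esub> y \<otimes>\<^bsub>G\<^esub> inv\<^bsub>G\<^esub> x \<otimes>\<^bsub>G\<^esub> inv\<^bsub>G\<^esub> y"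

definition surface_relator :: "('a, 'b) monoid_scheme \<Rightarrow> nat \<Rightarrow> (nat \<Rightarrow> 'a) \<Rightarrow> (nat \<Rightarrow> 'a) \<Rightarrow> 'a" where
  "surface_relator G d x y =
     foldr (\<lambda>i r. grp_commutator G (x i) (y i) \<otimes>\<^bsub>G\<^esub> r) [0..<d] \<one>\<^bsub>G\<^esub>"

definition center_of :: "('a, 'b) monoid_scheme \<Rightarrow> 'a set \<Rightarrow> 'a set" where
  "center_of G S = {z \<in> S. \<forall>x\<in>S. z \<otimes>\<^bsub>G\<^esub> x = x \<otimes>\<^bsub>G\<^esub> z}"

text \<open>P (with generators a_i, b_i, i<d) is the surface group
  <a_1,b_1,...,a_d,b_d | [a_1,b_1]...[a_d,b_d]> as far as homomorphisms into H are concerned: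
  P is generated by the a_i, b_i, the relator holds, and every tuple in H satisfying
  the relator is the image of the generators under some homomorphism P -> H.\<close>
definition surface_presented_wrt ::
  "('p, 'f) monoid_scheme \<Rightarrow> nat \<Rightarrow> (nat \<Rightarrow> 'p) \<Rightarrow> (nat \<Rightarrow> 'p) \<Rightarrow> ('h, 'k) monoid_scheme \<Rightarrow> bool" where
  "surface_presented_wrt P d a b H \<longleftrightarrow>
     group P \<and> (\<forall>i<d. a i \<in> carrier P \<and> b i \<in> carrier P) \<and>
     generate P (a ` {..<d} \<union> b ` {..<d}) = carrier P \<and>
     surface_relator P d a b = \<one>\<^bsub>P\<^esub> \<and>
     (\<forall>x y. (\<forall>i<d. x i \<in> carrier H \<and> y i \<in> carrier H) \<and> surface_relator H d x y = \<one>\<^bsub>H\<^esub>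
        \<longrightarrow> (\<exists>h\<in>hom P H. \<forall>i<d. h (a i) = x i \<and> h (b i) = y i))"

definition Hom_lifts ::
  "('p, 'f) monoid_scheme \<Rightarrow> ('c, 'e) monoid_scheme \<Rightarrow> ('c \<Rightarrow> 'g) \<Rightarrow> ('p \<Rightarrow> 'g) \<Rightarrow> ('p \<Rightarrow> 'c) set" where
  "Hom_lifts P G' q g =
     {g'. g' \<in> hom P G' \<and> g' \<in> extensional (carrier P) \<and> (\<forall>x\<in>carrier P. q (g' x) = g x)}"

end

theory Submission
  imports Defs
begin

text \<open>
  Fix lifts along \<open>q\<close> of the images under \<open>g\<close> of the standard generators \<open>a\<^sub>i, b\<^sub>i\<close>. By the
  presentation of \<open>\<pi>\<close>, \<open>Hom\<^sub>g(\<pi>, G')\<close> is in bijection with the tuples \<open>(x, y)\<close> of lifts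
  satisfying \<open>\<Prod> [x\<^sub>i, y\<^sub>i] = 1\<close>. Call two tuples of lifts equivalent if they agree modulo
  \<open>Z = Z(\<Gamma>)\<close> in every coordinate except \<open>y\<^sub>0\<close>. The kernel \<open>\<Gamma>\<close> acts on the classes by
  simultaneous conjugation without changing the number of solutions in a class, so it suffices
  to show that \<open>|D| |Z|\<^bsup>2d-2\<^esup>\<close> divides the number of solutions in a class whose stabiliser
  is \<open>D\<close>; the elements of \<open>D\<close> commute with \<open>x\<^sub>0\<close> modulo \<open>Z\<close>. Right multiplication by
  \<open>E = Z\<^sup>d \<times> (D \<times> Z\<^bsup>d-1\<^esup>)\<close> preserves the class and multiplies the relator by a central factor
  that depends only on the class. This factor is a homomorphism \<open>E \<rightarrow> Z\<close>; its kernel acts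
  freely on the solutions in the class, and \<open>|E| = |D| |Z|\<^bsup>2d-1\<^esup>\<close> divides \<open>|Z|\<close> times its order.
\<close>

section \<open>Counting with group actions\<close>

lemma group_actionI:
  fixes G (structure)
  assumes "group G"
    and closed: "\<And>g x. g \<in> carrier G \<Longrightarrow> x \<in> E \<Longrightarrow> act g x \<in> E"
    and one: "\<And>x. x \<in> E \<Longrightarrow> act \<one>\<^bsub>G\<^esub> x = x"
    and mult: "\<And>g h x. \<lbrakk>g \<in> carrier G; h \<in> carrier G; x \<in> E\<rbrakk> \<Longrightarrow> act (g \<otimes>\<^bsub>G\<^esub> h) x = act g (act h x)"
  shows "group_action G E (\<lambda>g. \<lambda>x\<in>E. act g x)"
proof -
  interpret group G by fact
  have inverse: "act (inv g) (act g x) = x" if "g \<in> carrier G" "x \<in> E" for g x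
    using that mult[of "inv g" g x] one[of x] by simp
  have "bij_betw (act g) E E" if g: "g \<in> carrier G" for g
  proof (rule bij_betwI[where g = "act (inv g)"])
    show "act g \<in> E \<rightarrow> E" "act (inv g) \<in> E \<rightarrow> E" using g closed by auto
    show "act (inv g) (act g x) = x" if "x \<in> E" for x using g that inverse by simp
    show "act g (act (inv g) x) = x" if "x \<in> E" for x using g that inverse[of "inv g" x] by simp
  qed
  then have "(\<lambda>x\<in>E. act g x) \<in> Bij E" if "g \<in> carrier G" for g
    using that by (simp add: Bij_def bij_betw_restrict_eq)
  moreover have "(\<lambda>x\<in>E. act (g \<otimes> h) x) = compose E (\<lambda>x\<in>E. act g x) (\<lambda>x\<in>E. act h x)"
    if "g \<in> carrier G" "h \<in> carrier G" for g h
    using that closed mult by (auto simp: compose_def)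
  ultimately have "(\<lambda>g. \<lambda>x\<in>E. act g x) \<in> hom G (BijGroup E)"
    by (intro homI) (simp_all add: BijGroup_def)
  then show ?thesis
    by (simp add: group_action_def group_hom_def group_hom_axioms_def group_BijGroup is_group)
qed

lemma (in group_action) dvd_sum_of_orbit_invariant:
  assumes fin: "finite (carrier G)" "finite E"
    and inv: "\<And>g x. g \<in> carrier G \<Longrightarrow> x \<in> E \<Longrightarrow> w (\<phi> g x) = w x"
    and dvd: "\<And>x. x \<in> E \<Longrightarrow> M * card (stabilizer G \<phi> x) dvd order G * w x"
  shows "M dvd (\<Sum>x\<in>E. w x)"
proof -
  have orbit_sum_dvd: "M dvd (\<Sum>y\<in>orbit G \<phi> x. w y)" if x: "x \<in> E" for x
  proof -
    have "(\<Sum>y\<in>orbit G \<phi> x. w y) = (\<Sum>y\<in>orbit G \<phi> x. w x)"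
      using inv x by (intro sum.cong) (auto simp: orbit_def)
    then have sum_orbit: "(\<Sum>y\<in>orbit G \<phi> x. w y) = card (orbit G \<phi> x) * w x"
      by simp
    moreover have "card (orbit G \<phi> x) * card (stabilizer G \<phi> x) = order G"
      using x by (rule orbit_stabilizer_theorem)
    moreover have "card (stabilizer G \<phi> x) > 0"
      using stabilizer_one_closed[OF x] finite_subset[OF stabilizer_subset fin(1)]
      by (auto simp: card_gt_0_iff)
    ultimately have "M * card (stabilizer G \<phi> x) dvd card (orbit G \<phi> x) * w x * card (stabilizer G \<phi> x)"
      using dvd[OF x] by (simp add: ac_simps)
    then show ?thesis
      using \<open>card (stabilizer G \<phi> x) > 0\<close> sum_orbit by simp
  qed
  have "M dvd (\<Sum>orb\<in>orbits G E \<phi>. \<Sum>y\<in>orb. w y)"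
  proof (rule dvd_sum)
    fix orb assume "orb \<in> orbits G E \<phi>"
    then show "M dvd (\<Sum>y\<in>orb. w y)" using orbit_sum_dvd by (auto simp: orbits_def)
  qed
  then show ?thesis using disjoint_sum[OF fin(2), of w] by simp
qed

lemma (in group_action) order_dvd_card_if_free:
  assumes "finite (carrier G)" "finite E"
    and free: "\<And>g x. g \<in> carrier G \<Longrightarrow> x \<in> E \<Longrightarrow> \<phi> g x = x \<Longrightarrow> g = \<one>"
  shows "order G dvd card E"
proof -
  have "order G dvd (\<Sum>x\<in>E. 1)"
  proof (rule dvd_sum_of_orbit_invariant)
    fix x assume "x \<in> E"
    then have "stabilizer G \<phi> x = {\<one>}"
      using free stabilizer_one_closed by (auto simp: stabilizer_def)
    then show "order G * card (stabilizer G \<phi> x) dvd order G * 1" by simp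
  qed (use assms in auto)
  then show ?thesis by simp
qed

lemma (in group) card_subgroup_dvd_card_if_mult_closed:
  assumes K: "subgroup K G" "finite K" and A: "finite A" "A \<subseteq> carrier G"
    and closed: "\<And>a k. a \<in> A \<Longrightarrow> k \<in> K \<Longrightarrow> a \<otimes> k \<in> A"
  shows "card K dvd card A"
proof -
  have carrier: "a \<in> carrier G" "k \<in> carrier G" if "a \<in> A" "k \<in> K" for a k
    using that A(2) subgroup.subset[OF K(1)] by auto
  have "group_action (G\<lparr>carrier := K\<rparr>) A (\<lambda>k. \<lambda>a\<in>A. a \<otimes> inv k)"
  proof (rule group_actionI)
    show "group (G\<lparr>carrier := K\<rparr>)"
      using K(1) is_group by (rule subgroup.subgroup_is_group)
    show "a \<otimes> inv k \<in> A" if "k \<in> carrier (G\<lparr>carrier := K\<rparr>)" "a \<in> A" for k a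
      using that closed subgroup.m_inv_closed[OF K(1)] by simp
    show "a \<otimes> inv \<one>\<^bsub>G\<lparr>carrier := K\<rparr>\<^esub> = a" if "a \<in> A" for a
      using that A(2) by auto
    show "a \<otimes> inv (k \<otimes>\<^bsub>G\<lparr>carrier := K\<rparr>\<^esub> k') = a \<otimes> inv k' \<otimes> inv k"
      if "k \<in> carrier (G\<lparr>carrier := K\<rparr>)" "k' \<in> carrier (G\<lparr>carrier := K\<rparr>)" "a \<in> A" for k k' a
      using that carrier by (simp add: inv_mult_group m_assoc)
  qed
  then have "order (G\<lparr>carrier := K\<rparr>) dvd card A"
  proof (rule group_action.order_dvd_card_if_free)
    show "k = \<one>\<^bsub>G\<lparr>carrier := K\<rparr>\<^esub>"
      if "k \<in> carrier (G\<lparr>carrier := K\<rparr>)" "a \<in> A" "(\<lambda>a\<in>A. a \<otimes> inv k) a = a" for k a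
      using that carrier by simp
  qed (use K A in simp_all)
  then show ?thesis by (simp add: order_def)
qed

lemma (in group_hom) order_dvd_card_kernel_mult_order:
  assumes "finite (carrier H)"
  shows "order G dvd card (kernel G H h) * order H"
proof -
  interpret img: group_hom G "H\<lparr>carrier := h ` carrier G\<rparr>" h
    using induced_group_hom[OF G.subgroup_self] by simp
  have "kernel G (H\<lparr>carrier := h ` carrier G\<rparr>) h = kernel G H h"
    by (auto simp: kernel_def)
  then have "order (G Mod kernel G H h) = card (h ` carrier G)"
    using iso_same_order[OF img.FactGroup_iso_set] by (simp add: order_def)
  then have "order G = card (h ` carrier G) * card (kernel G H h)"
    using G.lagrange[OF subgroup_kernel] by (simp add: order_def FactGroup_def)
  moreover have "card (h ` carrier G) dvd order H"
    using H.lagrange[OF img_is_subgroup] by (metis dvd_triv_right)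
  ultimately show ?thesis by (simp add: mult.commute)
qed

lemma (in group) inv_cancel_left [simp]:
  "x \<in> carrier G \<Longrightarrow> w \<in> carrier G \<Longrightarrow> inv x \<otimes> (x \<otimes> w) = w"
  by (simp add: m_assoc[symmetric])

lemma (in group) cancel_inv_left [simp]:
  "x \<in> carrier G \<Longrightarrow> w \<in> carrier G \<Longrightarrow> x \<otimes> (inv x \<otimes> w) = w"
  by (simp add: m_assoc[symmetric])

lemma hom_agree_on_generate:
  assumes "group P" "group H" "h1 \<in> hom P H" "h2 \<in> hom P H" "S \<subseteq> carrier P"
    and agree: "\<And>z. z \<in> S \<Longrightarrow> h1 z = h2 z" and "x \<in> generate P S"
  shows "h1 x = h2 x"
proof -
  interpret h1: group_hom P H h1 by (simp add: group_hom_def group_hom_axioms_def assms)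
  interpret h2: group_hom P H h2 by (simp add: group_hom_def group_hom_axioms_def assms)
  show ?thesis
    using \<open>x \<in> generate P S\<close>
  proof (induction rule: generate.induct)
    case (eng x y)
    then have "x \<in> carrier P" "y \<in> carrier P"
      using h1.G.generate_in_carrier[OF assms(5)] by auto
    then show ?case using eng by simp
  qed (use agree assms(5) in auto)
qed

section \<open>Commutator products\<close>

definition commutator_product ::
    "('a, 'b) monoid_scheme \<Rightarrow> nat list \<Rightarrow> (nat \<Rightarrow> 'a) \<Rightarrow> (nat \<Rightarrow> 'a) \<Rightarrow> 'a" where
  "commutator_product G l x y = foldr (\<lambda>i r. grp_commutator G (x i) (y i) \<otimes>\<^bsub>G\<^esub> r) l \<one>\<^bsub>G\<^esub>"

lemma surface_relator_eq_commutator_product: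
  "surface_relator G d x y = commutator_product G [0..<d] x y"
  by (simp add: surface_relator_def commutator_product_def)

lemma commutator_product_Nil [simp]: "commutator_product G [] x y = \<one>\<^bsub>G\<^esub>"
  by (simp add: commutator_product_def)

lemma commutator_product_Cons [simp]:
  "commutator_product G (i # l) x y = grp_commutator G (x i) (y i) \<otimes>\<^bsub>G\<^esub> commutator_product G l x y"
  by (simp add: commutator_product_def)

lemma commutator_product_cong:
  "(\<And>i. i \<in> set l \<Longrightarrow> x i = x' i) \<Longrightarrow> (\<And>i. i \<in> set l \<Longrightarrow> y i = y' i) \<Longrightarrow>
    commutator_product G l x y = commutator_product G l x' y'"
  by (induction l) auto

lemma (in group) commutator_closed [simp]:
  "x \<in> carrier G \<Longrightarrow> y \<in> carrier G \<Longrightarrow> grp_commutator G x y \<in> carrier G"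
  by (simp add: grp_commutator_def)

lemma (in group) commutator_product_closed:
  "x ` set l \<subseteq> carrier G \<Longrightarrow> y ` set l \<subseteq> carrier G \<Longrightarrow> commutator_product G l x y \<in> carrier G"
  by (induction l) auto

lemma (in group_hom) hom_commutator:
  "x \<in> carrier G \<Longrightarrow> y \<in> carrier G \<Longrightarrow> h (grp_commutator G x y) = grp_commutator H (h x) (h y)"
  by (simp add: grp_commutator_def)

lemma (in group_hom) hom_commutator_product:
  "x ` set l \<subseteq> carrier G \<Longrightarrow> y ` set l \<subseteq> carrier G \<Longrightarrow>
    h (commutator_product G l x y) = commutator_product H l (\<lambda>i. h (x i)) (\<lambda>i. h (y i))"
  by (induction l) (auto simp: hom_commutator G.commutator_product_closed)

lemma (in group) conj_eq_one_iff:
  assumes "g \<in> carrier G" "x \<in> carrier G"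
  shows "g \<otimes> x \<otimes> inv g = \<one> \<longleftrightarrow> x = \<one>"
proof
  assume "g \<otimes> x \<otimes> inv g = \<one>"
  then have "inv g \<otimes> (g \<otimes> x \<otimes> inv g) \<otimes> g = inv g \<otimes> \<one> \<otimes> g"
    by simp
  then show "x = \<one>"
    using assms by (simp add: m_assoc)
qed (use assms in simp)

lemma (in group) conjugation_hom: "g \<in> carrier G \<Longrightarrow> (\<lambda>x. g \<otimes> x \<otimes> inv g) \<in> hom G G"
  by (intro homI) (simp_all add: m_assoc)

definition commutator_correction :: "('a, 'b) monoid_scheme \<Rightarrow> 'a \<Rightarrow> 'a \<Rightarrow> 'a \<Rightarrow> 'a \<Rightarrow> 'a" where
  "commutator_correction G x y a b =
     y \<otimes>\<^bsub>G\<^esub> (x \<otimes>\<^bsub>G\<^esub> grp_commutator G (inv\<^bsub>G\<^esub> y) a \<otimes>\<^bsub>G\<^esub> inv\<^bsub>G\<^esub> x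
        \<otimes>\<^bsub>G\<^esub> grp_commutator G x b) \<otimes>\<^bsub>G\<^esub> inv\<^bsub>G\<^esub> y"

lemma (in group) commutator_mult_right:
  assumes carrier: "x \<in> carrier G" "y \<in> carrier G" "a \<in> carrier G" "b \<in> carrier G"
    and ab: "a \<otimes> b = b \<otimes> a"
  shows "grp_commutator G (x \<otimes> a) (y \<otimes> b) = grp_commutator G x y \<otimes> commutator_correction G x y a b"
proof -
  have "b \<otimes> inv a = inv a \<otimes> (a \<otimes> b) \<otimes> inv a"
    using carrier by (simp add: m_assoc)
  also have "\<dots> = inv a \<otimes> (b \<otimes> a) \<otimes> inv a"
    using ab by simp
  also have "\<dots> = inv a \<otimes> b"
    using carrier by (simp add: m_assoc)
  finally have "b \<otimes> inv a = inv a \<otimes> b" .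
  then have "b \<otimes> (inv a \<otimes> w) = inv a \<otimes> (b \<otimes> w)" if "w \<in> carrier G" for w
    using carrier that by (simp add: m_assoc[symmetric])
  then show ?thesis
    using carrier by (simp add: grp_commutator_def commutator_correction_def m_assoc inv_mult_group)
qed

section \<open>The centre of the kernel\<close>

locale kernel_center = group_hom G H q
  for G :: "('a, 'b) monoid_scheme" (structure) and H :: "('c, 'd) monoid_scheme" (structure)
    and q :: "'a \<Rightarrow> 'c"
begin

abbreviation N where "N \<equiv> kernel G H q"
abbreviation Z where "Z \<equiv> center_of G N"

lemma kernel_iff: "n \<in> N \<longleftrightarrow> n \<in> carrier G \<and> q n = \<one>\<^bsub>H\<^esub>"
  by (simp add: kernel_def)

lemma center_iff: "z \<in> Z \<longleftrightarrow> z \<in> N \<and> (\<forall>n\<in>N. z \<otimes> n = n \<otimes> z)"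
  by (simp add: center_of_def)

lemma center_subset_kernel: "Z \<subseteq> N"
  by (auto simp: center_iff)

lemma center_closed [simp]: "z \<in> Z \<Longrightarrow> z \<in> carrier G"
  by (simp add: center_iff kernel_iff)

lemma center_in_kernel [simp]: "z \<in> Z \<Longrightarrow> q z = \<one>\<^bsub>H\<^esub>"
  using center_subset_kernel by (auto simp: kernel_iff)

lemma center_commute: "z \<in> Z \<Longrightarrow> n \<in> N \<Longrightarrow> z \<otimes> n = n \<otimes> z"
  by (simp add: center_iff)

lemma center_subgroup: "subgroup Z G"
proof (rule G.subgroupI)
  show "Z \<subseteq> carrier G" using center_closed by blast
  have "\<one> \<in> Z" unfolding center_iff by (auto simp: kernel_iff)
  then show "Z \<noteq> {}" by auto
next
  fix z assume z: "z \<in> Z"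
  have "inv z \<otimes> n = n \<otimes> inv z" if "n \<in> N" for n
  proof -
    have n: "n \<in> carrier G" using that by (simp add: kernel_iff)
    have "inv z \<otimes> n = inv z \<otimes> (n \<otimes> z) \<otimes> inv z"
      using z n by (simp add: G.m_assoc)
    also have "\<dots> = inv z \<otimes> (z \<otimes> n) \<otimes> inv z"
      using center_commute[OF z that] by simp
    also have "\<dots> = n \<otimes> inv z"
      using z n by (simp add: G.m_assoc)
    finally show ?thesis .
  qed
  moreover have "inv z \<in> N"
    using z center_subset_kernel subgroup.m_inv_closed[OF subgroup_kernel] by blast
  ultimately show "inv z \<in> Z"
    unfolding center_iff by blast
next
  fix z w assume z: "z \<in> Z" and w: "w \<in> Z"
  have "z \<otimes> w \<otimes> n = n \<otimes> (z \<otimes> w)" if "n \<in> N" for n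
  proof -
    have n: "n \<in> carrier G" using that by (simp add: kernel_iff)
    have "z \<otimes> w \<otimes> n = z \<otimes> (w \<otimes> n)"
      using z w n by (simp add: G.m_assoc)
    also have "\<dots> = z \<otimes> n \<otimes> w"
      using z w n center_commute[OF w that] by (simp add: G.m_assoc)
    also have "\<dots> = n \<otimes> (z \<otimes> w)"
      using z w n center_commute[OF z that] by (simp add: G.m_assoc)
    finally show ?thesis .
  qed
  moreover have "z \<otimes> w \<in> N"
    using z w center_subset_kernel subgroup.m_closed[OF subgroup_kernel] by blast
  ultimately show "z \<otimes> w \<in> Z"
    unfolding center_iff by blast
qed

lemma conj_center_closed:
  assumes g: "g \<in> carrier G" and z: "z \<in> Z"
  shows "g \<otimes> z \<otimes> inv g \<in> Z"
proof -
  have "g \<otimes> z \<otimes> inv g \<in> N"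
    using g z by (simp add: kernel_iff)
  moreover have "g \<otimes> z \<otimes> inv g \<otimes> n = n \<otimes> (g \<otimes> z \<otimes> inv g)" if n: "n \<in> N" for n
  proof -
    have n': "inv g \<otimes> n \<otimes> g \<in> N" "n \<in> carrier G"
      using g n by (simp_all add: kernel_iff)
    have "g \<otimes> z \<otimes> inv g \<otimes> n = g \<otimes> (z \<otimes> (inv g \<otimes> n \<otimes> g)) \<otimes> inv g"
      using g z n' by (simp add: G.m_assoc)
    also have "\<dots> = g \<otimes> (inv g \<otimes> n \<otimes> g \<otimes> z) \<otimes> inv g"
      using center_commute[OF z n'(1)] by simp
    also have "\<dots> = n \<otimes> (g \<otimes> z \<otimes> inv g)"
      using g z n' by (simp add: G.m_assoc)
    finally show ?thesis .
  qed
  ultimately show ?thesis unfolding center_iff by blast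
qed

lemma conj_center_fibre:
  assumes "g \<in> carrier G" "h \<in> carrier G" "q g = q h" and z: "z \<in> Z"
  shows "h \<otimes> z \<otimes> inv h = g \<otimes> z \<otimes> inv g"
proof -
  define c where "c = inv g \<otimes> h"
  have c: "c \<in> N" "c \<in> carrier G" and h: "h = g \<otimes> c"
    using assms by (simp_all add: c_def kernel_iff)
  have "c \<otimes> z \<otimes> inv c = z \<otimes> c \<otimes> inv c"
    using center_commute[OF z c(1)] by simp
  also have "\<dots> = z"
    using z c by (simp add: G.m_assoc)
  finally have "c \<otimes> z \<otimes> inv c = z" .
  moreover have "h \<otimes> z \<otimes> inv h = g \<otimes> (c \<otimes> z \<otimes> inv c) \<otimes> inv g"
    using assms(1) c(2) z unfolding h by (simp add: G.m_assoc G.inv_mult_group)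
  ultimately show ?thesis by simp
qed

lemma kernel_coset_fibre:
  assumes "x \<in> carrier G" "x' \<in> carrier G" "inv x \<otimes> x' \<in> N"
  shows "q x' = q x"
proof -
  have "\<one>\<^bsub>H\<^esub> = inv\<^bsub>H\<^esub> q x \<otimes>\<^bsub>H\<^esub> q x'"
    using assms by (simp add: kernel_iff)
  then show ?thesis
    using assms H.inv_solve_left[of "\<one>\<^bsub>H\<^esub>" "q x" "q x'"] by simp
qed

lemma center_mult_closed: "z \<in> Z \<Longrightarrow> w \<in> Z \<Longrightarrow> z \<otimes> w \<in> Z"
  by (rule subgroup.m_closed[OF center_subgroup])

lemma center_inv_closed: "z \<in> Z \<Longrightarrow> inv z \<in> Z"
  by (rule subgroup.m_inv_closed[OF center_subgroup])

lemma commutator_conj_center: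
  assumes "y \<in> carrier G" "a \<in> Z"
  shows "grp_commutator G y a \<in> Z"
proof -
  have "grp_commutator G y a = y \<otimes> a \<otimes> inv y \<otimes> inv a"
    by (simp add: grp_commutator_def)
  then show ?thesis
    using assms by (simp add: conj_center_closed center_mult_closed center_inv_closed)
qed

lemma commutator_correction_center:
  assumes "x \<in> carrier G" "y \<in> carrier G" "a \<in> Z" "grp_commutator G x b \<in> Z"
  shows "commutator_correction G x y a b \<in> Z"
  using assms
  by (simp add: commutator_correction_def commutator_conj_center conj_center_closed center_mult_closed)

lemma commutator_correction_fibre:
  assumes x: "x \<in> carrier G" "x' \<in> carrier G" "inv x \<otimes> x' \<in> Z"
    and y: "y \<in> carrier G" "y' \<in> carrier G" "q y' = q y"
    and a: "a \<in> Z" and b: "b \<in> N" and xb: "grp_commutator G x b \<in> Z"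
  shows "commutator_correction G x' y' a b = commutator_correction G x y a b"
proof -
  define z where "z = inv x \<otimes> x'"
  have z: "z \<in> Z" "x' = x \<otimes> z" and bc: "b \<in> carrier G"
    using x b by (simp_all add: z_def kernel_iff)
  have qx: "q x' = q x"
    using x center_subset_kernel by (blast intro: kernel_coset_fibre)
  have "grp_commutator G (inv y') a = grp_commutator G (inv y) a"
    using conj_center_fibre[of "inv y" "inv y'" a] y a by (simp add: grp_commutator_def)
  moreover have "grp_commutator G x' b = grp_commutator G x b"
  proof -
    have "grp_commutator G x' b = x \<otimes> (z \<otimes> b \<otimes> inv z) \<otimes> inv x \<otimes> inv b"
      using x z bc by (simp add: grp_commutator_def G.m_assoc G.inv_mult_group)
    also have "z \<otimes> b \<otimes> inv z = b"
      using z bc center_commute[OF z(1) b] by (simp add: G.m_assoc)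
    finally show ?thesis by (simp add: grp_commutator_def)
  qed
  moreover have "x' \<otimes> grp_commutator G (inv y) a \<otimes> inv x' = x \<otimes> grp_commutator G (inv y) a \<otimes> inv x"
    using conj_center_fibre[OF x(1,2) qx[symmetric]] y a by (simp add: commutator_conj_center)
  ultimately have "commutator_correction G x' y' a b =
      y' \<otimes> (x \<otimes> grp_commutator G (inv y) a \<otimes> inv x \<otimes> grp_commutator G x b) \<otimes> inv y'"
    by (simp add: commutator_correction_def)
  also have "\<dots> = commutator_correction G x y a b"
    using conj_center_fibre[OF y(1,2) y(3)[symmetric]] y x a xb
    by (simp add: commutator_correction_def commutator_conj_center conj_center_closed center_mult_closed)
  finally show ?thesis .
qed

lemma commutator_product_fibre:
  assumes "x ` set l \<subseteq> carrier G" "x' ` set l \<subseteq> carrier G" "y ` set l \<subseteq> carrier G" "y' ` set l \<subseteq> carrier G"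
    and "\<And>i. i \<in> set l \<Longrightarrow> q (x' i) = q (x i) \<and> q (y' i) = q (y i)"
  shows "q (commutator_product G l x' y') = q (commutator_product G l x y)"
  using assms by (simp add: hom_commutator_product cong: commutator_product_cong)

text \<open>
  The correction terms of \<open>commutator_mult_right\<close> are central; moving them to the right
  conjugates them by partial products, and such conjugates only depend on cosets of \<open>N\<close>.
\<close>
lemma commutator_product_mult_right:
  assumes "x ` set l \<subseteq> carrier G" "x' ` set l \<subseteq> carrier G" "\<And>i. i \<in> set l \<Longrightarrow> inv (x i) \<otimes> x' i \<in> Z"
    and "y ` set l \<subseteq> carrier G" "y' ` set l \<subseteq> carrier G" "\<And>i. i \<in> set l \<Longrightarrow> q (y' i) = q (y i)"
    and "a ` set l \<subseteq> Z" "b ` set l \<subseteq> N" "\<And>i. i \<in> set l \<Longrightarrow> grp_commutator G (x i) (b i) \<in> Z"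
  shows "inv (commutator_product G l x y) \<otimes> commutator_product G l (\<lambda>i. x i \<otimes> a i) (\<lambda>i. y i \<otimes> b i) \<in> Z \<and>
    commutator_product G l (\<lambda>i. x' i \<otimes> a i) (\<lambda>i. y' i \<otimes> b i) =
      commutator_product G l x' y' \<otimes>
      (inv (commutator_product G l x y) \<otimes> commutator_product G l (\<lambda>i. x i \<otimes> a i) (\<lambda>i. y i \<otimes> b i))"
  using assms
proof (induction l)
  case Nil
  show ?case using center_subgroup by (simp add: subgroup.one_closed)
next
  case (Cons i l)
  have xi: "x i \<in> carrier G" "x' i \<in> carrier G" "inv (x i) \<otimes> x' i \<in> Z"
    and yi: "y i \<in> carrier G" "y' i \<in> carrier G" "q (y' i) = q (y i)"
    and ai: "a i \<in> Z" and bi: "b i \<in> N" "b i \<in> carrier G" and xbi: "grp_commutator G (x i) (b i) \<in> Z"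
    using Cons.prems by (auto simp: kernel_iff)
  define F where "F = commutator_product G l x y"
  define F' where "F' = commutator_product G l x' y'"
  define D where "D = inv F \<otimes> commutator_product G l (\<lambda>i. x i \<otimes> a i) (\<lambda>i. y i \<otimes> b i)"
  define \<delta> where "\<delta> = commutator_correction G (x i) (y i) (a i) (b i)"
  have carrier: "F \<in> carrier G" "F' \<in> carrier G"
    using Cons.prems by (auto simp: F_def F'_def intro!: G.commutator_product_closed)
  have IH: "D \<in> Z"
      "commutator_product G l (\<lambda>i. x' i \<otimes> a i) (\<lambda>i. y' i \<otimes> b i) = F' \<otimes> D"
    using Cons.IH Cons.prems unfolding D_def F_def F'_def by auto
  have "commutator_product G l (\<lambda>i. x i \<otimes> a i) (\<lambda>i. y i \<otimes> b i) \<in> carrier G"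
    using Cons.prems by (intro G.commutator_product_closed) (auto simp: kernel_iff image_subset_iff)
  then have F1: "commutator_product G l (\<lambda>i. x i \<otimes> a i) (\<lambda>i. y i \<otimes> b i) = F \<otimes> D"
    using carrier by (simp add: D_def)
  have \<delta>: "\<delta> \<in> Z" "commutator_correction G (x' i) (y' i) (a i) (b i) = \<delta>"
    using commutator_correction_center commutator_correction_fibre xi yi ai bi xbi by (simp_all add: \<delta>_def)
  have shift: "grp_commutator G (u \<otimes> a i) (v \<otimes> b i) = grp_commutator G u v \<otimes> commutator_correction G u v (a i) (b i)"
    if "u \<in> carrier G" "v \<in> carrier G" for u v
    using that ai bi center_commute[OF ai bi(1)] by (simp add: G.commutator_mult_right)
  have "q (x' j) = q (x j)" if "j \<in> set l" for j
    using Cons.prems(1-3) that center_subset_kernel by (intro kernel_coset_fibre) auto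
  then have qF: "q F' = q F"
    using Cons.prems unfolding F_def F'_def by (intro commutator_product_fibre) auto
  have conj: "inv F' \<otimes> \<delta> \<otimes> F' = inv F \<otimes> \<delta> \<otimes> F"
    using conj_center_fibre[of "inv F" "inv F'" \<delta>] carrier qF \<delta> by simp
  have prod_xy: "commutator_product G (i # l) x y = grp_commutator G (x i) (y i) \<otimes> F"
    and prod_xy': "commutator_product G (i # l) x' y' = grp_commutator G (x' i) (y' i) \<otimes> F'"
    by (simp_all add: F_def F'_def)
  have prod_shift: "commutator_product G (i # l) (\<lambda>i. x i \<otimes> a i) (\<lambda>i. y i \<otimes> b i) =
      grp_commutator G (x i) (y i) \<otimes> \<delta> \<otimes> (F \<otimes> D)"
    using xi(1) yi(1) by (simp add: shift F1 \<delta>_def)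
  have prod_shift': "commutator_product G (i # l) (\<lambda>i. x' i \<otimes> a i) (\<lambda>i. y' i \<otimes> b i) =
      grp_commutator G (x' i) (y' i) \<otimes> \<delta> \<otimes> (F' \<otimes> D)"
    using xi(2) yi(2) \<delta>(2) by (simp add: shift IH(2))
  have "inv (grp_commutator G (x i) (y i) \<otimes> F) \<otimes> (grp_commutator G (x i) (y i) \<otimes> \<delta> \<otimes> (F \<otimes> D)) =
      inv F \<otimes> \<delta> \<otimes> F \<otimes> D"
    using xi yi carrier \<delta> IH by (simp add: G.m_assoc G.inv_mult_group)
  moreover have "inv F \<otimes> \<delta> \<otimes> F \<otimes> D \<in> Z"
    using conj_center_closed[of "inv F" \<delta>] carrier \<delta> IH by (simp add: center_mult_closed)
  moreover have "grp_commutator G (x' i) (y' i) \<otimes> \<delta> \<otimes> (F' \<otimes> D) =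
      grp_commutator G (x' i) (y' i) \<otimes> F' \<otimes> (inv F' \<otimes> \<delta> \<otimes> F' \<otimes> D)"
    using xi yi carrier \<delta> IH by (simp add: G.m_assoc)
  ultimately show ?case
    unfolding prod_xy prod_xy' prod_shift prod_shift' conj by simp
qed

lemma finite_fibre:
  assumes "finite N"
  shows "finite {x \<in> carrier G. q x = c}"
proof (cases "\<exists>x0 \<in> carrier G. q x0 = c")
  case True
  then obtain x0 where x0: "x0 \<in> carrier G" "q x0 = c" by blast
  have "{x \<in> carrier G. q x = c} \<subseteq> (\<lambda>n. x0 \<otimes> n) ` N"
  proof
    fix x assume x: "x \<in> {x \<in> carrier G. q x = c}"
    then have "inv x0 \<otimes> x \<in> N"
      using x0(1) x0(2)[symmetric] by (simp add: kernel_iff)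
    moreover have "x = x0 \<otimes> (inv x0 \<otimes> x)"
      using x x0 by simp
    ultimately show "x \<in> (\<lambda>n. x0 \<otimes> n) ` N" by blast
  qed
  then show ?thesis
    using assms finite_surj by blast
next
  case False
  then have "{x \<in> carrier G. q x = c} = {}" by blast
  then show ?thesis by (metis finite.emptyI)
qed

lemma conj_kernel_fibre: "g \<in> N \<Longrightarrow> a \<in> carrier G \<Longrightarrow> q (g \<otimes> a \<otimes> inv g) = q a"
  by (simp add: kernel_iff)

end

section \<open>Tuples of lifts\<close>

locale surface_lifts = kernel_center +
  fixes d :: nat and u v :: "nat \<Rightarrow> 'c"
  assumes finite_kernel: "finite N" and genus_pos: "1 \<le> d"
begin

definition tuples :: "(nat \<Rightarrow> 'a) monoid" where
  "tuples = product_group {..<d} (\<lambda>_. G)"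

definition tuple_pairs :: "((nat \<Rightarrow> 'a) \<times> (nat \<Rightarrow> 'a)) monoid" where
  "tuple_pairs = tuples \<times>\<times> tuples"

lemma group_tuples: "group tuples"
  by (simp add: tuples_def G.is_group)

lemma group_tuple_pairs: "group tuple_pairs"
  by (simp add: tuple_pairs_def DirProd_group group_tuples)

lemma carrier_tuple_pairs:
  "carrier tuple_pairs = (\<Pi>\<^sub>E i\<in>{..<d}. carrier G) \<times> (\<Pi>\<^sub>E i\<in>{..<d}. carrier G)"
  by (simp add: tuple_pairs_def tuples_def)

lemma mult_tuple_pairs:
  "(x, y) \<otimes>\<^bsub>tuple_pairs\<^esub> (x', y') = ((\<lambda>i\<in>{..<d}. x i \<otimes> x' i), (\<lambda>i\<in>{..<d}. y i \<otimes> y' i))"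
  by (simp add: tuple_pairs_def tuples_def)

lemma inv_tuple_pairs:
  "(x, y) \<in> carrier tuple_pairs \<Longrightarrow>
    inv\<^bsub>tuple_pairs\<^esub> (x, y) = ((\<lambda>i\<in>{..<d}. inv (x i)), (\<lambda>i\<in>{..<d}. inv (y i)))"
  by (simp add: tuple_pairs_def tuples_def group_tuples G.is_group)

definition shifts :: "'a set \<Rightarrow> ((nat \<Rightarrow> 'a) \<times> (nat \<Rightarrow> 'a)) set" where
  "shifts D = (\<Pi>\<^sub>E i\<in>{..<d}. Z) \<times> (\<Pi>\<^sub>E i\<in>{..<d}. if i = 0 then D else Z)"

lemma subgroup_shifts: "subgroup D G \<Longrightarrow> subgroup (shifts D) tuple_pairs"
  unfolding shifts_def tuple_pairs_def
  by (intro DirProd_subgroups group_tuples)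
     (simp_all add: tuples_def PiE_subgroup_product_group G.is_group center_subgroup)

lemma shifts_coordinates:
  assumes "(e, f) \<in> shifts D" "i < d"
  shows "e i \<in> Z" "f i \<in> (if i = 0 then D else Z)"
  using assms PiE_mem[of e "{..<d}" "\<lambda>_. Z" i] PiE_mem[of f "{..<d}" "\<lambda>i. if i = 0 then D else Z" i]
  by (simp_all add: shifts_def)

definition lifts :: "((nat \<Rightarrow> 'a) \<times> (nat \<Rightarrow> 'a)) set" where
  "lifts = {(x, y) \<in> carrier tuple_pairs. \<forall>i<d. q (x i) = u i \<and> q (y i) = v i}"

definition relator :: "(nat \<Rightarrow> 'a) \<times> (nat \<Rightarrow> 'a) \<Rightarrow> 'a" where
  "relator s = commutator_product G [0..<d] (fst s) (snd s)"

definition solutions :: "((nat \<Rightarrow> 'a) \<times> (nat \<Rightarrow> 'a)) set" where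
  "solutions = {s \<in> lifts. relator s = \<one>}"

definition same_class :: "(((nat \<Rightarrow> 'a) \<times> (nat \<Rightarrow> 'a)) \<times> ((nat \<Rightarrow> 'a) \<times> (nat \<Rightarrow> 'a))) set" where
  "same_class = rcong\<^bsub>tuple_pairs\<^esub> (shifts N) \<inter> lifts \<times> lifts"

lemma lifts_subset: "lifts \<subseteq> carrier tuple_pairs"
  by (auto simp: lifts_def)

lemma finite_lifts: "finite lifts"
proof -
  have "lifts \<subseteq> (\<Pi>\<^sub>E i\<in>{..<d}. {x \<in> carrier G. q x = u i}) \<times> (\<Pi>\<^sub>E i\<in>{..<d}. {y \<in> carrier G. q y = v i})"
    by (auto simp: lifts_def carrier_tuple_pairs PiE_iff extensional_def)
  moreover have "finite ((\<Pi>\<^sub>E i\<in>{..<d}. {x \<in> carrier G. q x = u i}) \<times> (\<Pi>\<^sub>E i\<in>{..<d}. {y \<in> carrier G. q y = v i}))"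
    using finite_fibre[OF finite_kernel] by (simp add: finite_PiE)
  ultimately show ?thesis by (rule finite_subset)
qed

lemma equiv_same_class: "equiv lifts same_class"
proof -
  have "equiv (carrier tuple_pairs) (rcong\<^bsub>tuple_pairs\<^esub> (shifts N))"
    by (rule subgroup.equiv_rcong[OF subgroup_shifts[OF subgroup_kernel] group_tuple_pairs])
  then show ?thesis
    using lifts_subset unfolding same_class_def equiv_def refl_on_def sym_def trans_def by blast
qed

lemma relator_closed: "s \<in> carrier tuple_pairs \<Longrightarrow> relator s \<in> carrier G"
  unfolding relator_def
  by (rule G.commutator_product_closed) (auto simp: carrier_tuple_pairs PiE_iff mem_Times_iff)

lemma relator_mult:
  "relator ((x, y) \<otimes>\<^bsub>tuple_pairs\<^esub> (e, f)) =
    commutator_product G [0..<d] (\<lambda>i. x i \<otimes> e i) (\<lambda>i. y i \<otimes> f i)"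
  unfolding relator_def mult_tuple_pairs by (rule commutator_product_cong) auto

lemma same_class_iff:
  "((x, y), (x', y')) \<in> same_class \<longleftrightarrow> (x, y) \<in> lifts \<and> (x', y') \<in> lifts \<and>
    (\<forall>i<d. inv (x i) \<otimes> x' i \<in> Z \<and> (i \<noteq> 0 \<longrightarrow> inv (y i) \<otimes> y' i \<in> Z))"
proof -
  have "inv (y 0) \<otimes> y' 0 \<in> N" if "(x, y) \<in> lifts" "(x', y') \<in> lifts"
  proof -
    have "y 0 \<in> carrier G" "y' 0 \<in> carrier G" "q (y' 0) = q (y 0)"
      using that genus_pos by (auto simp: lifts_def carrier_tuple_pairs PiE_iff)
    then show ?thesis by (simp add: kernel_iff)
  qed
  then show ?thesis
    by (auto simp: same_class_def r_congruent_def lifts_def inv_tuple_pairs mult_tuple_pairs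
        shifts_def PiE_iff) (metis lessThan_iff not_gr0)
qed

lemma relator_mult_shift:
  assumes related: "((x, y), (x', y')) \<in> same_class" and shift: "(e, f) \<in> shifts D"
    and D: "D \<subseteq> N" "\<And>g. g \<in> D \<Longrightarrow> grp_commutator G (x 0) g \<in> Z"
  shows "inv (relator (x, y)) \<otimes> relator ((x, y) \<otimes>\<^bsub>tuple_pairs\<^esub> (e, f)) \<in> Z"
    and "relator ((x', y') \<otimes>\<^bsub>tuple_pairs\<^esub> (e, f)) =
      relator (x', y') \<otimes> (inv (relator (x, y)) \<otimes> relator ((x, y) \<otimes>\<^bsub>tuple_pairs\<^esub> (e, f)))"
proof -
  have lifts: "(x, y) \<in> lifts" "(x', y') \<in> lifts"
    and xx': "\<And>i. i < d \<Longrightarrow> inv (x i) \<otimes> x' i \<in> Z"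
    using related by (simp_all add: same_class_iff)
  then have carrier: "x i \<in> carrier G" "x' i \<in> carrier G" "y i \<in> carrier G" "y' i \<in> carrier G"
    and yy': "q (y' i) = q (y i)" if "i < d" for i
    using that by (auto simp: lifts_def carrier_tuple_pairs PiE_iff)
  have ef: "e i \<in> Z" "f i \<in> N" if "i < d" for i
    using shifts_coordinates[OF shift that] D(1) center_subset_kernel by (auto split: if_splits)
  have "grp_commutator G (x i) (f i) \<in> Z" if "i < d" for i
    using shifts_coordinates(2)[OF shift that] D(2) carrier[OF that]
    by (auto simp: commutator_conj_center split: if_splits)
  then have "inv (commutator_product G [0..<d] x y) \<otimes>
      commutator_product G [0..<d] (\<lambda>i. x i \<otimes> e i) (\<lambda>i. y i \<otimes> f i) \<in> Z \<and>
    commutator_product G [0..<d] (\<lambda>i. x' i \<otimes> e i) (\<lambda>i. y' i \<otimes> f i) =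
      commutator_product G [0..<d] x' y' \<otimes>
      (inv (commutator_product G [0..<d] x y) \<otimes>
        commutator_product G [0..<d] (\<lambda>i. x i \<otimes> e i) (\<lambda>i. y i \<otimes> f i))"
    using carrier xx' yy' ef by (intro commutator_product_mult_right) auto
  then show "inv (relator (x, y)) \<otimes> relator ((x, y) \<otimes>\<^bsub>tuple_pairs\<^esub> (e, f)) \<in> Z"
    and "relator ((x', y') \<otimes>\<^bsub>tuple_pairs\<^esub> (e, f)) =
      relator (x', y') \<otimes> (inv (relator (x, y)) \<otimes> relator ((x, y) \<otimes>\<^bsub>tuple_pairs\<^esub> (e, f)))"
    unfolding relator_mult by (simp_all add: relator_def)
qed

lemma shifts_mono:
  assumes "D \<subseteq> N"
  shows "shifts D \<subseteq> shifts N"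
proof -
  have "(\<Pi>\<^sub>E i\<in>{..<d}. if i = 0 then D else Z) \<subseteq> (\<Pi>\<^sub>E i\<in>{..<d}. if i = 0 then N else Z)"
    using assms by (intro PiE_mono) auto
  then show ?thesis by (auto simp: shifts_def)
qed

lemma lifts_mult_shift:
  assumes "s \<in> lifts" "e \<in> shifts N"
  shows "s \<otimes>\<^bsub>tuple_pairs\<^esub> e \<in> lifts"
proof -
  interpret TP: group tuple_pairs by (rule group_tuple_pairs)
  obtain x y e1 e2 where s: "s = (x, y)" and e: "e = (e1, e2)" by fastforce
  have "e \<in> carrier tuple_pairs"
    using assms(2) subgroup.subset[OF subgroup_shifts[OF subgroup_kernel]] by blast
  then have "s \<otimes>\<^bsub>tuple_pairs\<^esub> e \<in> carrier tuple_pairs"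
    using assms(1) lifts_subset by (intro TP.m_closed) auto
  moreover have "q (x i \<otimes> e1 i) = u i \<and> q (y i \<otimes> e2 i) = v i" if "i < d" for i
  proof -
    have "e1 i \<in> N" "e2 i \<in> N"
      using shifts_coordinates[OF assms(2)[unfolded e] that] center_subset_kernel
      by (auto split: if_splits)
    moreover have "x i \<in> carrier G" "y i \<in> carrier G"
      using assms(1) that by (auto simp: s lifts_def carrier_tuple_pairs PiE_iff)
    ultimately have "q (x i \<otimes> e1 i) = q (x i)" "q (y i \<otimes> e2 i) = q (y i)"
      by (simp_all add: kernel_iff)
    moreover have "q (x i) = u i" "q (y i) = v i"
      using assms(1) that by (auto simp: s lifts_def)
    ultimately show ?thesis by simp
  qed
  ultimately show ?thesis
    by (simp add: s e lifts_def mult_tuple_pairs)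
qed

lemma same_class_mult_shift:
  assumes "(s, s') \<in> same_class" "e \<in> shifts N"
  shows "(s, s' \<otimes>\<^bsub>tuple_pairs\<^esub> e) \<in> same_class"
proof -
  interpret TP: group tuple_pairs by (rule group_tuple_pairs)
  have carrier: "s \<in> carrier tuple_pairs" "s' \<in> carrier tuple_pairs" "e \<in> carrier tuple_pairs"
    using assms lifts_subset subgroup.subset[OF subgroup_shifts[OF subgroup_kernel]]
    by (auto simp: same_class_def)
  have "inv\<^bsub>tuple_pairs\<^esub> s \<otimes>\<^bsub>tuple_pairs\<^esub> (s' \<otimes>\<^bsub>tuple_pairs\<^esub> e) =
      (inv\<^bsub>tuple_pairs\<^esub> s \<otimes>\<^bsub>tuple_pairs\<^esub> s') \<otimes>\<^bsub>tuple_pairs\<^esub> e"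
    using carrier by (simp add: TP.m_assoc)
  moreover have "inv\<^bsub>tuple_pairs\<^esub> s \<otimes>\<^bsub>tuple_pairs\<^esub> s' \<in> shifts N"
    using assms(1) by (simp add: same_class_def r_congruent_def)
  ultimately have "inv\<^bsub>tuple_pairs\<^esub> s \<otimes>\<^bsub>tuple_pairs\<^esub> (s' \<otimes>\<^bsub>tuple_pairs\<^esub> e) \<in> shifts N"
    using assms(2) subgroup.m_closed[OF subgroup_shifts[OF subgroup_kernel]] by simp
  moreover have "s' \<otimes>\<^bsub>tuple_pairs\<^esub> e \<in> lifts"
    using assms lifts_mult_shift by (simp add: same_class_def)
  ultimately show ?thesis
    using assms(1) lifts_subset by (auto simp: same_class_def r_congruent_def)
qed

definition relator_defect :: "(nat \<Rightarrow> 'a) \<times> (nat \<Rightarrow> 'a) \<Rightarrow> (nat \<Rightarrow> 'a) \<times> (nat \<Rightarrow> 'a) \<Rightarrow> 'a" where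
  "relator_defect s e = inv (relator s) \<otimes> relator (s \<otimes>\<^bsub>tuple_pairs\<^esub> e)"

lemma finite_shifts:
  assumes "finite D"
  shows "finite (shifts D)"
proof -
  have "finite Z"
    using finite_kernel center_subset_kernel by (rule finite_subset[rotated])
  then show ?thesis
    unfolding shifts_def using assms by (intro finite_cartesian_product finite_PiE) auto
qed

lemma card_shifts:
  assumes "finite D"
  shows "card (shifts D) = card D * card Z ^ (2 * d - 1)"
proof -
  obtain d' where d: "d = Suc d'" using genus_pos by (cases d) auto
  have "card (\<Pi>\<^sub>E i\<in>{..<d}. if i = 0 then D else Z) = (\<Prod>i<d. card (if i = 0 then D else Z))"
    by (simp add: card_PiE)
  also have "\<dots> = card D * card Z ^ d'"
    unfolding d prod.lessThan_Suc_shift by simp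
  finally have "card (\<Pi>\<^sub>E i\<in>{..<d}. if i = 0 then D else Z) = card D * card Z ^ d'" .
  moreover have "2 * d - 1 = d + d'"
    using d by simp
  ultimately show ?thesis
    by (simp add: shifts_def card_cartesian_product card_PiE power_add)
qed

context
  fixes s D
  assumes lift: "s \<in> lifts" and D: "subgroup D G" "D \<subseteq> N"
    and commutes: "\<And>g. g \<in> D \<Longrightarrow> grp_commutator G (fst s 0) g \<in> Z"
begin

lemma relator_mult_shift_in_class:
  assumes "(s, s') \<in> same_class" "e \<in> shifts D"
  shows "relator (s' \<otimes>\<^bsub>tuple_pairs\<^esub> e) = relator s' \<otimes> relator_defect s e"
    and "relator_defect s e \<in> Z"
proof -
  obtain x y x' y' e1 e2 where "s = (x, y)" "s' = (x', y')" "e = (e1, e2)" by (metis surj_pair)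
  then show "relator (s' \<otimes>\<^bsub>tuple_pairs\<^esub> e) = relator s' \<otimes> relator_defect s e"
    and "relator_defect s e \<in> Z"
    using relator_mult_shift[of x y x' y' e1 e2 D] assms D(2) commutes
    by (simp_all add: relator_defect_def)
qed

lemma relator_defect_hom:
  "relator_defect s \<in> hom (tuple_pairs\<lparr>carrier := shifts D\<rparr>) (G\<lparr>carrier := Z\<rparr>)"
proof (rule homI)
  interpret TP: group tuple_pairs by (rule group_tuple_pairs)
  have refl: "(s, s) \<in> same_class"
    using equiv_same_class lift by (simp add: equiv_def refl_on_def)
  fix e f assume e: "e \<in> carrier (tuple_pairs\<lparr>carrier := shifts D\<rparr>)"
    and f: "f \<in> carrier (tuple_pairs\<lparr>carrier := shifts D\<rparr>)"
  then have carrier: "e \<in> carrier tuple_pairs" "f \<in> carrier tuple_pairs" "s \<in> carrier tuple_pairs"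
    using subgroup.subset[OF subgroup_shifts[OF D(1)]] lift lifts_subset by auto
  have "(s, s \<otimes>\<^bsub>tuple_pairs\<^esub> e) \<in> same_class"
    using same_class_mult_shift[OF refl, of e] e shifts_mono[OF D(2)] by auto
  then have "relator (s \<otimes>\<^bsub>tuple_pairs\<^esub> e \<otimes>\<^bsub>tuple_pairs\<^esub> f) =
      relator (s \<otimes>\<^bsub>tuple_pairs\<^esub> e) \<otimes> relator_defect s f"
    using f by (simp add: relator_mult_shift_in_class)
  then have "relator_defect s (e \<otimes>\<^bsub>tuple_pairs\<^esub> f) = relator_defect s e \<otimes> relator_defect s f"
    using carrier by (simp add: relator_defect_def TP.m_assoc G.m_assoc relator_closed)
  then show "relator_defect s (e \<otimes>\<^bsub>tuple_pairs\<lparr>carrier := shifts D\<rparr>\<^esub> f) =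
      relator_defect s e \<otimes>\<^bsub>G\<lparr>carrier := Z\<rparr>\<^esub> relator_defect s f"
    by simp
  show "relator_defect s e \<in> carrier (G\<lparr>carrier := Z\<rparr>)"
    using e refl by (simp add: relator_mult_shift_in_class)
qed

lemma dvd_card_kernel_relator_defect:
  "card D * card Z ^ (2 * d - 2) dvd
    card (kernel (tuple_pairs\<lparr>carrier := shifts D\<rparr>) (G\<lparr>carrier := Z\<rparr>) (relator_defect s))"
proof -
  interpret E: group "tuple_pairs\<lparr>carrier := shifts D\<rparr>"
    by (rule subgroup.subgroup_is_group[OF subgroup_shifts[OF D(1)] group_tuple_pairs])
  interpret ZG: group "G\<lparr>carrier := Z\<rparr>"
    by (rule subgroup.subgroup_is_group[OF center_subgroup G.is_group])
  interpret defect: group_hom "tuple_pairs\<lparr>carrier := shifts D\<rparr>" "G\<lparr>carrier := Z\<rparr>" "relator_defect s"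
    by (simp add: group_hom_def group_hom_axioms_def E.is_group ZG.is_group relator_defect_hom)
  have finite: "finite D" "finite Z"
    using D(2) center_subset_kernel finite_kernel finite_subset by blast+
  have "2 * d - 1 = Suc (2 * d - 2)"
    using genus_pos by simp
  then have "card D * card Z ^ (2 * d - 2) * card Z = card (shifts D)"
    using card_shifts[OF finite(1)] by (simp add: mult.assoc)
  also have "\<dots> dvd card (kernel (tuple_pairs\<lparr>carrier := shifts D\<rparr>) (G\<lparr>carrier := Z\<rparr>) (relator_defect s)) * card Z"
    using defect.order_dvd_card_kernel_mult_order finite(2) by (simp add: order_def)
  finally have "card D * card Z ^ (2 * d - 2) * card Z dvd
      card (kernel (tuple_pairs\<lparr>carrier := shifts D\<rparr>) (G\<lparr>carrier := Z\<rparr>) (relator_defect s)) * card Z" .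
  moreover have "card Z > 0"
    using finite(2) subgroup.one_closed[OF center_subgroup] by (auto simp: card_gt_0_iff)
  ultimately show ?thesis
    by (simp add: dvd_mult_cancel2)
qed

lemma card_kernel_relator_defect_dvd_card_class_solutions:
  "card (kernel (tuple_pairs\<lparr>carrier := shifts D\<rparr>) (G\<lparr>carrier := Z\<rparr>) (relator_defect s))
    dvd card (same_class `` {s} \<inter> solutions)"
proof -
  interpret TP: group tuple_pairs by (rule group_tuple_pairs)
  define K where "K = kernel (tuple_pairs\<lparr>carrier := shifts D\<rparr>) (G\<lparr>carrier := Z\<rparr>) (relator_defect s)"
  have "subgroup K (tuple_pairs\<lparr>carrier := shifts D\<rparr>)"
    unfolding K_def
    by (rule group_hom.subgroup_kernel)
       (simp add: group_hom_def group_hom_axioms_def relator_defect_hom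
         subgroup.subgroup_is_group[OF subgroup_shifts[OF D(1)] group_tuple_pairs]
         subgroup.subgroup_is_group[OF center_subgroup G.is_group])
  then have K: "subgroup K tuple_pairs"
    by (rule TP.incl_subgroup[OF subgroup_shifts[OF D(1)]])
  have K_shifts: "K \<subseteq> shifts D"
    unfolding K_def kernel_def by auto
  have K_defect: "relator_defect s k = \<one>" if "k \<in> K" for k
    using that unfolding K_def kernel_def by auto
  show ?thesis
    unfolding K_def[symmetric]
  proof (rule TP.card_subgroup_dvd_card_if_mult_closed[OF K])
    show "finite K"
      using finite_shifts K_shifts D(2) finite_kernel by (meson finite_subset)
    show "finite (same_class `` {s} \<inter> solutions)"
      using finite_lifts unfolding solutions_def by (rule finite_subset[rotated]) blast
    show "same_class `` {s} \<inter> solutions \<subseteq> carrier tuple_pairs"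
      using lifts_subset unfolding same_class_def by blast
  next
    fix t k assume t: "t \<in> same_class `` {s} \<inter> solutions" and k: "k \<in> K"
    then have "(s, t) \<in> same_class" "relator t = \<one>" "k \<in> shifts D"
      using K_shifts unfolding solutions_def by auto
    then have "(s, t \<otimes>\<^bsub>tuple_pairs\<^esub> k) \<in> same_class" "relator (t \<otimes>\<^bsub>tuple_pairs\<^esub> k) = \<one>"
      using same_class_mult_shift[of s t k] shifts_mono[OF D(2)] relator_mult_shift_in_class(1)[of t k]
        K_defect[OF k]
      by auto
    then show "t \<otimes>\<^bsub>tuple_pairs\<^esub> k \<in> same_class `` {s} \<inter> solutions"
      unfolding solutions_def same_class_def by blast
  qed
qed

lemma dvd_card_class_solutions:
  "card D * card Z ^ (2 * d - 2) dvd card (same_class `` {s} \<inter> solutions)"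
  using dvd_card_kernel_relator_defect card_kernel_relator_defect_dvd_card_class_solutions by (rule dvd_trans)

end

definition conj_lift :: "'a \<Rightarrow> (nat \<Rightarrow> 'a) \<times> (nat \<Rightarrow> 'a) \<Rightarrow> (nat \<Rightarrow> 'a) \<times> (nat \<Rightarrow> 'a)" where
  "conj_lift g = map_prod (\<lambda>x. \<lambda>i\<in>{..<d}. g \<otimes> x i \<otimes> inv g) (\<lambda>y. \<lambda>i\<in>{..<d}. g \<otimes> y i \<otimes> inv g)"

lemma conj_lift_one: "s \<in> carrier tuple_pairs \<Longrightarrow> conj_lift \<one> s = s"
  by (cases s) (auto simp: conj_lift_def carrier_tuple_pairs PiE_iff extensional_def)

lemma conj_lift_mult:
  "g \<in> carrier G \<Longrightarrow> h \<in> carrier G \<Longrightarrow> s \<in> carrier tuple_pairs \<Longrightarrow>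
    conj_lift (g \<otimes> h) s = conj_lift g (conj_lift h s)"
  by (cases s) (auto simp: conj_lift_def carrier_tuple_pairs PiE_iff G.m_assoc G.inv_mult_group)

lemma conj_lift_lifts:
  assumes "g \<in> N" "s \<in> lifts"
  shows "conj_lift g s \<in> lifts"
proof -
  obtain x y where xy: "s = (x, y)" by fastforce
  have "g \<in> carrier G" using assms(1) by (simp add: kernel_iff)
  moreover have "x i \<in> carrier G" "y i \<in> carrier G" "q (x i) = u i" "q (y i) = v i" if "i < d" for i
    using assms(2) that by (auto simp: xy lifts_def carrier_tuple_pairs PiE_iff)
  ultimately show ?thesis
    using conj_kernel_fibre[OF assms(1)]
    by (auto simp: xy conj_lift_def lifts_def carrier_tuple_pairs simp del: hom_mult)
qed

lemma relator_conj_lift: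
  assumes g: "g \<in> carrier G" and s: "s \<in> carrier tuple_pairs"
  shows "relator (conj_lift g s) = g \<otimes> relator s \<otimes> inv g"
proof -
  interpret conj: group_hom G G "\<lambda>a. g \<otimes> a \<otimes> inv g"
    by (simp add: group_hom_def group_hom_axioms_def G.is_group G.conjugation_hom g)
  obtain x y where xy: "s = (x, y)" by fastforce
  have "relator (conj_lift g s) =
      commutator_product G [0..<d] (\<lambda>i. g \<otimes> x i \<otimes> inv g) (\<lambda>i. g \<otimes> y i \<otimes> inv g)"
    unfolding relator_def conj_lift_def xy by (auto intro: commutator_product_cong)
  also have "\<dots> = g \<otimes> relator s \<otimes> inv g"
    using s unfolding relator_def xy
    by (subst conj.hom_commutator_product) (auto simp: carrier_tuple_pairs PiE_iff)
  finally show ?thesis .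
qed

lemma same_class_conj_lift:
  assumes "(s, s') \<in> same_class" "g \<in> N"
  shows "(conj_lift g s, conj_lift g s') \<in> same_class"
proof -
  obtain x y x' y' where xy: "s = (x, y)" "s' = (x', y')" by fastforce
  have g: "g \<in> carrier G"
    using assms(2) by (simp add: kernel_iff)
  have lifts: "(x, y) \<in> lifts" "(x', y') \<in> lifts"
    and Z: "\<And>i. i < d \<Longrightarrow> inv (x i) \<otimes> x' i \<in> Z \<and> (i \<noteq> 0 \<longrightarrow> inv (y i) \<otimes> y' i \<in> Z)"
    using assms(1) by (simp_all add: xy same_class_iff)
  have carrier: "x i \<in> carrier G" "x' i \<in> carrier G" "y i \<in> carrier G" "y' i \<in> carrier G"
    if "i < d" for i
    using lifts that by (auto simp: lifts_def carrier_tuple_pairs PiE_iff)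
  have conj: "inv (g \<otimes> a \<otimes> inv g) \<otimes> (g \<otimes> b \<otimes> inv g) = g \<otimes> (inv a \<otimes> b) \<otimes> inv g"
    if "a \<in> carrier G" "b \<in> carrier G" for a b
    using that g by (simp add: G.m_assoc G.inv_mult_group)
  show ?thesis
    using lifts conj_lift_lifts[OF assms(2) lifts(1)] conj_lift_lifts[OF assms(2) lifts(2)]
      Z carrier conj conj_center_closed[OF g]
    by (simp add: xy same_class_iff conj_lift_def)
qed

lemma conj_lift_inv_cancel:
  "g \<in> carrier G \<Longrightarrow> s \<in> carrier tuple_pairs \<Longrightarrow> conj_lift (inv g) (conj_lift g s) = s"
  by (simp add: conj_lift_mult[symmetric] conj_lift_one)

lemma conj_lift_class:
  assumes g: "g \<in> N" and s: "s \<in> lifts"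
  shows "conj_lift g ` (same_class `` {s}) = same_class `` {conj_lift g s}"
proof
  show "conj_lift g ` (same_class `` {s}) \<subseteq> same_class `` {conj_lift g s}"
    using same_class_conj_lift[OF _ g] by blast
next
  have inv_g: "inv g \<in> N" "g \<in> carrier G"
    using g subgroup.m_inv_closed[OF subgroup_kernel] by (auto simp: kernel_iff)
  show "same_class `` {conj_lift g s} \<subseteq> conj_lift g ` (same_class `` {s})"
  proof
    fix t assume "t \<in> same_class `` {conj_lift g s}"
    then have related: "(conj_lift g s, t) \<in> same_class" by simp
    then have t: "t \<in> carrier tuple_pairs"
      using lifts_subset by (auto simp: same_class_def)
    have "(conj_lift (inv g) (conj_lift g s), conj_lift (inv g) t) \<in> same_class"
      using same_class_conj_lift[OF related inv_g(1)] .
    moreover have "conj_lift (inv g) (conj_lift g s) = s"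
      using s lifts_subset inv_g(2) conj_lift_inv_cancel by blast
    ultimately have "conj_lift (inv g) t \<in> same_class `` {s}"
      by simp
    moreover have "t = conj_lift g (conj_lift (inv g) t)"
      using conj_lift_inv_cancel[of "inv g" t] inv_g t by simp
    ultimately show "t \<in> conj_lift g ` (same_class `` {s})" by blast
  qed
qed

lemma card_conj_lift_class_solutions:
  assumes g: "g \<in> N" and s: "s \<in> lifts"
  shows "card (conj_lift g ` (same_class `` {s}) \<inter> solutions) = card (same_class `` {s} \<inter> solutions)"
proof -
  have gc: "g \<in> carrier G" using g by (simp add: kernel_iff)
  have class_carrier: "same_class `` {s} \<subseteq> carrier tuple_pairs"
    using lifts_subset by (auto simp: same_class_def)
  have "conj_lift g ` (same_class `` {s}) \<inter> solutions = conj_lift g ` (same_class `` {s} \<inter> solutions)"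
  proof -
    have "conj_lift g t \<in> solutions \<longleftrightarrow> t \<in> solutions" if "t \<in> same_class `` {s}" for t
    proof -
      have "t \<in> lifts" "t \<in> carrier tuple_pairs" "conj_lift g t \<in> lifts"
        using that class_carrier conj_lift_lifts[OF g] by (auto simp: same_class_def)
      moreover have "relator (conj_lift g t) = \<one> \<longleftrightarrow> relator t = \<one>"
        using gc \<open>t \<in> carrier tuple_pairs\<close>
        by (simp add: relator_conj_lift relator_closed G.conj_eq_one_iff)
      ultimately show ?thesis by (simp add: solutions_def)
    qed
    then show ?thesis by blast
  qed
  moreover have "inj_on (conj_lift g) (same_class `` {s} \<inter> solutions)"
    using conj_lift_inv_cancel[OF gc] class_carrier
    by (intro inj_on_inverseI[where g = "conj_lift (inv g)"]) auto
  ultimately show ?thesis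
    by (simp add: card_image)
qed

lemma commutator_in_center_of_stabilizer:
  assumes g: "g \<in> N" and s: "s \<in> lifts"
    and stable: "conj_lift g ` (same_class `` {s}) = same_class `` {s}"
  shows "grp_commutator G (fst s 0) g \<in> Z"
proof -
  obtain x y where xy: "s = (x, y)" by fastforce
  have gc: "g \<in> carrier G" and x0: "x 0 \<in> carrier G"
    using g s genus_pos by (auto simp: kernel_iff xy lifts_def carrier_tuple_pairs PiE_iff)
  have "(s, s) \<in> same_class"
    using equiv_same_class s by (simp add: equiv_def refl_on_def)
  then have "(s, conj_lift g s) \<in> same_class"
    using stable by blast
  then have w: "inv (x 0) \<otimes> (g \<otimes> x 0 \<otimes> inv g) \<in> Z"
    using genus_pos by (auto simp: xy same_class_iff conj_lift_def)
  have "grp_commutator G (x 0) g = x 0 \<otimes> inv (inv (x 0) \<otimes> (g \<otimes> x 0 \<otimes> inv g)) \<otimes> inv (x 0)"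
    using gc x0 by (simp add: grp_commutator_def G.m_assoc G.inv_mult_group)
  then show ?thesis
    using conj_center_closed[OF x0 center_inv_closed[OF w]] by (simp add: xy)
qed

lemma card_solutions_eq_sum_classes:
  "card solutions = (\<Sum>c\<in>lifts // same_class. card (c \<inter> solutions))"
proof -
  have "solutions = (\<Union>c\<in>lifts // same_class. c \<inter> solutions)"
    using Union_quotient[OF equiv_same_class] by (auto simp: solutions_def)
  moreover have "card (\<Union>c\<in>lifts // same_class. c \<inter> solutions) = (\<Sum>c\<in>lifts // same_class. card (c \<inter> solutions))"
  proof (rule card_UN_disjoint)
    show "finite (lifts // same_class)"
      using finite_lifts equiv_type[OF equiv_same_class] by (rule finite_quotient)
    show "\<forall>c\<in>lifts // same_class. finite (c \<inter> solutions)"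
      using finite_lifts in_quotient_imp_subset[OF equiv_same_class] finite_subset by blast
    show "\<forall>c\<in>lifts // same_class. \<forall>c'\<in>lifts // same_class. c \<noteq> c' \<longrightarrow> c \<inter> solutions \<inter> (c' \<inter> solutions) = {}"
      using quotient_disj[OF equiv_same_class] by blast
  qed
  ultimately show ?thesis by simp
qed

lemma group_action_conj_classes:
  "group_action (G\<lparr>carrier := N\<rparr>) (lifts // same_class) (\<lambda>g. \<lambda>c\<in>lifts // same_class. conj_lift g ` c)"
proof (rule group_actionI)
  show "group (G\<lparr>carrier := N\<rparr>)"
    by (rule subgroup.subgroup_is_group[OF subgroup_kernel G.is_group])
next
  fix g c assume g: "g \<in> carrier (G\<lparr>carrier := N\<rparr>)" and "c \<in> lifts // same_class"
  then obtain s where s: "s \<in> lifts" and c: "c = same_class `` {s}"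
    by (auto elim: quotientE)
  have "conj_lift g s \<in> lifts"
    using conj_lift_lifts g s by simp
  then show "conj_lift g ` c \<in> lifts // same_class"
    using g s by (simp add: c conj_lift_class quotientI)
next
  fix c assume "c \<in> lifts // same_class"
  then have "c \<subseteq> carrier tuple_pairs"
    using in_quotient_imp_subset[OF equiv_same_class] lifts_subset by blast
  then show "conj_lift \<one>\<^bsub>G\<lparr>carrier := N\<rparr>\<^esub> ` c = c"
    using conj_lift_one by force
next
  fix g h c assume "g \<in> carrier (G\<lparr>carrier := N\<rparr>)" "h \<in> carrier (G\<lparr>carrier := N\<rparr>)"
    and c: "c \<in> lifts // same_class"
  moreover have "c \<subseteq> carrier tuple_pairs"
    using c in_quotient_imp_subset[OF equiv_same_class] lifts_subset by blast
  ultimately have "conj_lift (g \<otimes> h) t = conj_lift g (conj_lift h t)" if "t \<in> c" for t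
    using that by (intro conj_lift_mult) (auto simp: kernel_iff)
  then show "conj_lift (g \<otimes>\<^bsub>G\<lparr>carrier := N\<rparr>\<^esub> h) ` c = conj_lift g ` conj_lift h ` c"
    unfolding image_image by simp
qed

theorem card_kernel_center_dvd_card_solutions:
  "card N * card Z ^ (2 * d - 2) dvd card solutions"
proof -
  interpret action: group_action "G\<lparr>carrier := N\<rparr>" "lifts // same_class"
      "\<lambda>g. \<lambda>c\<in>lifts // same_class. conj_lift g ` c"
    by (rule group_action_conj_classes)
  have "card N * card Z ^ (2 * d - 2) dvd (\<Sum>c\<in>lifts // same_class. card (c \<inter> solutions))"
  proof (rule action.dvd_sum_of_orbit_invariant)
    show "finite (carrier (G\<lparr>carrier := N\<rparr>))"
      using finite_kernel by simp
    show "finite (lifts // same_class)"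
      using finite_lifts equiv_type[OF equiv_same_class] by (rule finite_quotient)
  next
    fix g c assume "g \<in> carrier (G\<lparr>carrier := N\<rparr>)" "c \<in> lifts // same_class"
    then show "card ((\<lambda>c\<in>lifts // same_class. conj_lift g ` c) c \<inter> solutions) = card (c \<inter> solutions)"
      by (auto simp: quotient_def card_conj_lift_class_solutions)
  next
    fix c assume c: "c \<in> lifts // same_class"
    then obtain s where s: "s \<in> lifts" and c_eq: "c = same_class `` {s}"
      by (auto simp: quotient_def)
    define D where "D = stabilizer (G\<lparr>carrier := N\<rparr>) (\<lambda>g. \<lambda>c\<in>lifts // same_class. conj_lift g ` c) c"
    have "subgroup D G"
      using G.incl_subgroup[OF subgroup_kernel action.stabilizer_subgroup[OF c]] by (simp add: D_def)
    moreover have "D \<subseteq> N" "\<And>g. g \<in> D \<Longrightarrow> grp_commutator G (fst s 0) g \<in> Z"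
      using c commutator_in_center_of_stabilizer[OF _ s] by (auto simp: D_def stabilizer_def c_eq)
    ultimately have "card D * card Z ^ (2 * d - 2) dvd card (c \<inter> solutions)"
      unfolding c_eq by (rule dvd_card_class_solutions[OF s])
    then show "card N * card Z ^ (2 * d - 2) * card D dvd order (G\<lparr>carrier := N\<rparr>) * card (c \<inter> solutions)"
      by (simp add: order_def D_def mult_ac mult_dvd_mono)
  qed
  then show ?thesis
    by (simp add: card_solutions_eq_sum_classes)
qed

section \<open>Homomorphisms from the surface group\<close>

definition generator_values :: "(nat \<Rightarrow> 'p) \<Rightarrow> (nat \<Rightarrow> 'p) \<Rightarrow> ('p \<Rightarrow> 'a) \<Rightarrow> (nat \<Rightarrow> 'a) \<times> (nat \<Rightarrow> 'a)" where
  "generator_values a b h = ((\<lambda>i\<in>{..<d}. h (a i)), (\<lambda>i\<in>{..<d}. h (b i)))"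

context
  fixes P :: "('p, 'f) monoid_scheme" and a b :: "nat \<Rightarrow> 'p" and f :: "'p \<Rightarrow> 'c"
  assumes presented: "surface_presented_wrt P d a b G" and f: "f \<in> hom P H"
    and targets: "\<And>i. i < d \<Longrightarrow> u i = f (a i) \<and> v i = f (b i)"
begin

lemma presentation:
  "group P" "a ` {..<d} \<union> b ` {..<d} \<subseteq> carrier P"
  "generate P (a ` {..<d} \<union> b ` {..<d}) = carrier P"
  "commutator_product P [0..<d] a b = \<one>\<^bsub>P\<^esub>"
  using presented by (auto simp: surface_presented_wrt_def surface_relator_eq_commutator_product)

lemma inj_on_generator_values: "inj_on (generator_values a b) (Hom_lifts P G q f)"
proof (rule inj_onI)
  fix h1 h2 assume h1: "h1 \<in> Hom_lifts P G q f" and h2: "h2 \<in> Hom_lifts P G q f"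
    and eq: "generator_values a b h1 = generator_values a b h2"
  have "h1 (a i) = h2 (a i) \<and> h1 (b i) = h2 (b i)" if "i < d" for i
    using fun_cong[OF arg_cong[where f = fst, OF eq], of i]
      fun_cong[OF arg_cong[where f = snd, OF eq], of i] that by (simp add: generator_values_def)
  then have "h1 z = h2 z" if "z \<in> a ` {..<d} \<union> b ` {..<d}" for z
    using that by auto
  then have "h1 z = h2 z" if "z \<in> carrier P" for z
    using that h1 h2 hom_agree_on_generate[OF presentation(1) G.is_group _ _ presentation(2)] presentation(3)
    by (auto simp: Hom_lifts_def)
  then show "h1 = h2"
    using h1 h2 by (auto simp: Hom_lifts_def intro: extensionalityI)
qed

lemma generator_values_solution:
  assumes "h \<in> Hom_lifts P G q f"
  shows "generator_values a b h \<in> solutions"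
proof -
  have h: "h \<in> hom P G" "\<And>z. z \<in> carrier P \<Longrightarrow> q (h z) = f z"
    using assms by (auto simp: Hom_lifts_def)
  interpret h: group_hom P G h
    by (simp add: group_hom_def group_hom_axioms_def presentation(1) G.is_group h(1))
  have "generator_values a b h \<in> lifts"
    using presentation(2) h targets by (auto simp: generator_values_def lifts_def carrier_tuple_pairs)
  moreover have "relator (generator_values a b h) = commutator_product G [0..<d] (\<lambda>i. h (a i)) (\<lambda>i. h (b i))"
    unfolding relator_def generator_values_def by (auto intro: commutator_product_cong)
  then have "relator (generator_values a b h) = h (commutator_product P [0..<d] a b)"
    using presentation(2) by (simp add: h.hom_commutator_product image_subset_iff)
  ultimately show ?thesis
    by (simp add: solutions_def presentation(4))
qed

lemma solution_generator_values:
  assumes "t \<in> solutions"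
  obtains h where "h \<in> Hom_lifts P G q f" "t = generator_values a b h"
proof -
  obtain x y where t: "t = (x, y)" and lifts: "(x, y) \<in> lifts"
    and relator: "commutator_product G [0..<d] x y = \<one>"
    using assms by (cases t) (auto simp: solutions_def relator_def)
  have xy: "\<forall>i<d. x i \<in> carrier G \<and> y i \<in> carrier G"
    using lifts by (auto simp: lifts_def carrier_tuple_pairs PiE_iff)
  have "\<exists>h\<in>hom P G. \<forall>i<d. h (a i) = x i \<and> h (b i) = y i"
    using presented xy relator by (simp add: surface_presented_wrt_def surface_relator_eq_commutator_product)
  then obtain h where h: "h \<in> hom P G" and hab: "\<And>i. i < d \<Longrightarrow> h (a i) = x i \<and> h (b i) = y i"
    by blast
  have "q (h z) = f z" if "z \<in> carrier P" for z
  proof (rule hom_agree_on_generate[OF presentation(1) is_group _ f presentation(2)])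
    show "(\<lambda>z. q (h z)) \<in> hom P H"
      using h homh by (auto simp: hom_def Pi_def)
    show "z \<in> generate P (a ` {..<d} \<union> b ` {..<d})"
      using that presentation(3) by simp
    show "q (h z) = f z" if "z \<in> a ` {..<d} \<union> b ` {..<d}" for z
      using that hab targets lifts by (auto simp: lifts_def)
  qed
  moreover have "restrict h (carrier P) \<in> hom P G"
    using h monoid.m_closed[OF group.is_monoid[OF presentation(1)]] by (simp add: hom_def Pi_def)
  ultimately have "restrict h (carrier P) \<in> Hom_lifts P G q f"
    by (simp add: Hom_lifts_def)
  moreover have "t = generator_values a b (restrict h (carrier P))"
    using lifts presentation(2) hab
    by (auto simp: t generator_values_def lifts_def carrier_tuple_pairs PiE_iff extensional_def
        image_subset_iff intro!: ext)
  ultimately show thesis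
    by (rule that)
qed

lemma bij_betw_Hom_lifts_solutions: "bij_betw (generator_values a b) (Hom_lifts P G q f) solutions"
proof (rule bij_betw_imageI)
  have "solutions \<subseteq> generator_values a b ` Hom_lifts P G q f"
  proof
    fix t assume "t \<in> solutions"
    then obtain h where "h \<in> Hom_lifts P G q f" "t = generator_values a b h"
      by (rule solution_generator_values)
    then show "t \<in> generator_values a b ` Hom_lifts P G q f" by blast
  qed
  then show "generator_values a b ` Hom_lifts P G q f = solutions"
    using generator_values_solution by blast
qed (rule inj_on_generator_values)

end

end

theorem theorem2p1:
  fixes G' :: "('c, 'e) monoid_scheme" and G :: "('g, 'h) monoid_scheme"
    and P :: "('p, 'f) monoid_scheme"
    and q :: "'c \<Rightarrow> 'g" and g :: "'p \<Rightarrow> 'g"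
    and d :: nat and a b :: "nat \<Rightarrow> 'p"
  assumes "group G'" and "group G"
    and "q \<in> hom G' G" and "q ` carrier G' = carrier G"
    and "finite (kernel G' G q)"
    and "d \<ge> 1"
    and "surface_presented_wrt P d a b G'"
    and "surface_presented_wrt P d a b G"
    and "g \<in> hom P G"
  shows "card (kernel G' G q) * card (center_of G' (kernel G' G q)) ^ (2 * d - 2)
           dvd card (Hom_lifts P G' q g)"
proof -
  interpret surface_lifts G' G q d "\<lambda>i. g (a i)" "\<lambda>i. g (b i)"
    using assms
    by (simp add: surface_lifts_def surface_lifts_axioms_def kernel_center_def group_hom_def
        group_hom_axioms_def)
  have "card (Hom_lifts P G' q g) = card solutions"
    using bij_betw_Hom_lifts_solutions[OF assms(7,9)] by (rule bij_betw_same_card) simp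
  then show ?thesis
    using card_kernel_center_dvd_card_solutions by simp
qed

end
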